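(* Let $G'$ be a context-free grammar with start symbol $s$, no $\varepsilon$-rules and no useless nonterminal, let $\ell$ be a prefix of $G'$, and let $\mathrm{Expl}(G_\ell)$ be its explanation graph (defined in the context). Then for every defined goal $H$ with defining formula $H\Leftrightarrow\alpha_1\vee\dots\vee\alpha_M$ and every $i$, no two distinct occurrences of defined goals in the conjunction $\alpha_i$ belong to the same SCC.
   Context: Grammar: $G'$ has finite terminal set $\Sigma$, finite nonterminal set $N$, start symbol $s\in N$; every rule $A\to\alpha$ has $\alpha\in(N\cup\Sigma)^+$; no nonterminal is useless (each has a rule occurring in some derivation of a terminal string from $s$). A prefix is a nonempty string $\ell\in\Sigma^+$ that is an initial segment of some terminal string derivable from $s$. Explanation graph. For a prefix $\ell$ consider ground atoms $q(\ell)$, $p(\beta,u,v)$ with $\beta\in(N\cup\Sigma)^*$, $u,v\in\Sigma^*$, and switch atoms $m(A\to\alpha)$ for rules of $G'$. Consider all ground clauses: (C0) $q(\ell)\leftarrow p(s,\ell,\varepsilon)$; (C1) $p(\varepsilon,u,u)\leftarrow$ (empty body), for all $u$; (C2) for $a\in\Sigma$: $p(a\beta,a,\varepsilon)\leftarrow$ (empty body); and $p(a\beta,av,w)\leftarrow p(\beta,v,w)$ whenever $v\neq\varepsilon$; (C3) for $A\in N$ and each rule $A\to\alpha$: $p(A\beta,u,\varepsilon)\leftarrow m(A\to\alpha)\wedge p(\alpha,u,\varepsilon)$; and $p(A\beta,u,w)\leftarrow m(A\to\alpha)\wedge p(\alpha,u,v)\wedge p(\beta,v,w)$ whenever $v\neq\varepsilon$.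 A $p$- or $q$-atom is provable if it lies in the least Herbrand model of these clauses with all $m$-atoms taken as true. The defined goals of $\mathrm{Expl}(G_\ell)$ form the smallest set containing $q(\ell)$ such that whenever $H$ is a defined goal and $H\leftarrow\alpha$ is one of the clauses above whose $p$-atoms are all provable, every $p$-atom of $\alpha$ is a defined goal. The defining formula of a defined goal $H$ is $H\Leftrightarrow\alpha_1\vee\dots\vee\alpha_M$, where the $\alpha_i$ are the bodies of all such clauses with head $H$ whose $p$-atoms are all provable. $H$ is a parent of $C$ if $C$ occurs in some $\alpha_i$; the ancestor relation is the transitive closure of the parent relation. Two defined goals $A,B$ are equivalent if $A=B$ or each is an ancestor of the other; the equivalence classes are called SCCs (strongly connected components). *)

theory Defs
  imports Main
begin

datatype ('n, 't) sym = NT 'n | T 't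

type_synonym ('n, 't) rule = "'n \<times> ('n, 't) sym list"

definition derive1 :: "('n, 't) rule set \<Rightarrow> ('n, 't) sym list \<Rightarrow> ('n, 't) sym list \<Rightarrow> bool" where
  "derive1 R x y \<longleftrightarrow> (\<exists>u A \<alpha> v. x = u @ [NT A] @ v \<and> (A, \<alpha>) \<in> R \<and> y = u @ \<alpha> @ v)"

definition derives :: "('n, 't) rule set \<Rightarrow> ('n, 't) sym list \<Rightarrow> ('n, 't) sym list \<Rightarrow> bool" where
  "derives R = (derive1 R)\<^sup>*\<^sup>*"

definition syms :: "'t set \<Rightarrow> 'n set \<Rightarrow> ('n, 't) sym set" where
  "syms Sig N = NT ` N \<union> T ` Sig"

definition cfg :: "'t set \<Rightarrow> 'n set \<Rightarrow> 'n \<Rightarrow> ('n, 't) rule set \<Rightarrow> bool" where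
  "cfg Sig N s R \<longleftrightarrow>
     finite Sig \<and> finite N \<and> finite R \<and> s \<in> N \<and>
     (\<forall>(A, \<alpha>) \<in> R. A \<in> N \<and> \<alpha> \<noteq> [] \<and> set \<alpha> \<subseteq> syms Sig N) \<and>
     (\<forall>A \<in> N. \<exists>\<alpha> x y w. (A, \<alpha>) \<in> R \<and> derives R [NT s] (x @ [NT A] @ y) \<and>
                 derives R (x @ \<alpha> @ y) (map T w) \<and> set w \<subseteq> Sig)"

definition is_prefix :: "'t set \<Rightarrow> 'n \<Rightarrow> ('n, 't) rule set \<Rightarrow> 't list \<Rightarrow> bool" where
  "is_prefix Sig s R l \<longleftrightarrow> l \<noteq> [] \<and>
     (\<exists>w'. set (l @ w') \<subseteq> Sig \<and> derives R [NT s] (map T (l @ w')))"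

datatype ('n, 't) atom =
    Q "'t list"
  | P "('n, 't) sym list" "'t list" "'t list"
  | M "('n, 't) rule"

fun is_P :: "('n, 't) atom \<Rightarrow> bool" where
  "is_P (P _ _ _) = True"
| "is_P _ = False"

text \<open>The ground clauses (C0)-(C3); a clause is a head together with its body,
  a list of atoms (a conjunction, occurrences kept).\<close>
inductive clause :: "'t set \<Rightarrow> 'n set \<Rightarrow> 'n \<Rightarrow> ('n, 't) rule set \<Rightarrow> 't list
    \<Rightarrow> ('n, 't) atom \<Rightarrow> ('n, 't) atom list \<Rightarrow> bool"
  for Sig N s R l where
  C0: "clause Sig N s R l (Q l) [P [NT s] l []]"
| C1: "set u \<subseteq> Sig \<Longrightarrow> clause Sig N s R l (P [] u u) []"
| C2a: "a \<in> Sig \<Longrightarrow> set \<beta> \<subseteq> syms Sig N \<Longrightarrow>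
        clause Sig N s R l (P (T a # \<beta>) [a] []) []"
| C2b: "a \<in> Sig \<Longrightarrow> set \<beta> \<subseteq> syms Sig N \<Longrightarrow> set v \<subseteq> Sig \<Longrightarrow> set w \<subseteq> Sig \<Longrightarrow>
        v \<noteq> [] \<Longrightarrow>
        clause Sig N s R l (P (T a # \<beta>) (a # v) w) [P \<beta> v w]"
| C3a: "(A, \<alpha>) \<in> R \<Longrightarrow> set \<beta> \<subseteq> syms Sig N \<Longrightarrow> set u \<subseteq> Sig \<Longrightarrow>
        clause Sig N s R l (P (NT A # \<beta>) u []) [M (A, \<alpha>), P \<alpha> u []]"
| C3b: "(A, \<alpha>) \<in> R \<Longrightarrow> set \<beta> \<subseteq> syms Sig N \<Longrightarrow> set u \<subseteq> Sig \<Longrightarrow>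
        set v \<subseteq> Sig \<Longrightarrow> set w \<subseteq> Sig \<Longrightarrow> v \<noteq> [] \<Longrightarrow>
        clause Sig N s R l (P (NT A # \<beta>) u w) [M (A, \<alpha>), P \<alpha> u v, P \<beta> v w]"

text \<open>Least Herbrand model, all m-atoms (for rules of G') taken as true.\<close>
inductive provable :: "'t set \<Rightarrow> 'n set \<Rightarrow> 'n \<Rightarrow> ('n, 't) rule set \<Rightarrow> 't list
    \<Rightarrow> ('n, 't) atom \<Rightarrow> bool"
  for Sig N s R l where
  prov_M: "r \<in> R \<Longrightarrow> provable Sig N s R l (M r)"
| prov_clause: "clause Sig N s R l H body \<Longrightarrow> (\<forall>b \<in> set body. provable Sig N s R l b)
        \<Longrightarrow> provable Sig N s R l H"

definition used_clause :: "'t set \<Rightarrow> 'n set \<Rightarrow> 'n \<Rightarrow> ('n, 't) rule set \<Rightarrow> 't list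
    \<Rightarrow> ('n, 't) atom \<Rightarrow> ('n, 't) atom list \<Rightarrow> bool" where
  "used_clause Sig N s R l H body \<longleftrightarrow> clause Sig N s R l H body \<and>
     (\<forall>b \<in> set body. is_P b \<longrightarrow> provable Sig N s R l b)"

inductive defined_goal :: "'t set \<Rightarrow> 'n set \<Rightarrow> 'n \<Rightarrow> ('n, 't) rule set \<Rightarrow> 't list
    \<Rightarrow> ('n, 't) atom \<Rightarrow> bool"
  for Sig N s R l where
  dg_root: "defined_goal Sig N s R l (Q l)"
| dg_step: "defined_goal Sig N s R l H \<Longrightarrow> used_clause Sig N s R l H body \<Longrightarrow>
        b \<in> set body \<Longrightarrow> is_P b \<Longrightarrow> defined_goal Sig N s R l b"

text \<open>H is a parent of C if C occurs in some disjunct of the defining formula of H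
  (both being defined goals).\<close>
definition parent :: "'t set \<Rightarrow> 'n set \<Rightarrow> 'n \<Rightarrow> ('n, 't) rule set \<Rightarrow> 't list
    \<Rightarrow> ('n, 't) atom \<Rightarrow> ('n, 't) atom \<Rightarrow> bool" where
  "parent Sig N s R l H C \<longleftrightarrow> defined_goal Sig N s R l H \<and> defined_goal Sig N s R l C \<and>
     (\<exists>body. used_clause Sig N s R l H body \<and> C \<in> set body)"

definition ancestor :: "'t set \<Rightarrow> 'n set \<Rightarrow> 'n \<Rightarrow> ('n, 't) rule set \<Rightarrow> 't list
    \<Rightarrow> ('n, 't) atom \<Rightarrow> ('n, 't) atom \<Rightarrow> bool" where
  "ancestor Sig N s R l = (parent Sig N s R l)\<^sup>+\<^sup>+"

definition same_scc :: "'t set \<Rightarrow> 'n set \<Rightarrow> 'n \<Rightarrow> ('n, 't) rule set \<Rightarrow> 't list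
    \<Rightarrow> ('n, 't) atom \<Rightarrow> ('n, 't) atom \<Rightarrow> bool" where
  "same_scc Sig N s R l A B \<longleftrightarrow> A = B \<or>
     (ancestor Sig N s R l A B \<and> ancestor Sig N s R l B A)"

end

theory Submission
  imports Defs
begin

text \<open>Along every edge of the explanation graph the length of the input still to be parsed
  (the second argument of a p-atom) never increases, because a provable atom \<open>P \<gamma> u w\<close> has
  \<open>|w| \<le> |u|\<close>, strictly when \<open>\<gamma>\<close> is nonempty. Hence all goals of one SCC have the
  same remaining input length. The only clause bodies with two p-atoms come from (C3b),
  \<open>P \<alpha> u v \<and> P \<beta> v w\<close>, and since G' has no \<open>\<epsilon>\<close>-rules, \<open>\<alpha> \<noteq> []\<close>, so \<open>|v| < |u|\<close>:
  the two occurrences lie in different SCCs.\<close>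

fun input_length :: "('n, 't) atom \<Rightarrow> nat" where
  "input_length (Q l) = length l"
| "input_length (P _ u _) = length u"
| "input_length (M _) = 0"

lemma cfg_rhs_nonempty: "cfg Sig N s R \<Longrightarrow> (A, \<alpha>) \<in> R \<Longrightarrow> \<alpha> \<noteq> []"
  unfolding cfg_def by blast

lemma provable_P_length:
  assumes no_eps: "\<And>A \<alpha>. (A, \<alpha>) \<in> R \<Longrightarrow> \<alpha> \<noteq> []"
  shows "provable Sig N s R l (P \<gamma> u w) \<Longrightarrow>
    length w \<le> length u \<and> (\<gamma> \<noteq> [] \<longrightarrow> length w < length u)"
proof (induction "P \<gamma> u w" arbitrary: \<gamma> u w rule: provable.induct)
  case (prov_clause body)
  have IH: "\<And>\<gamma>' u' w'. P \<gamma>' u' w' \<in> set body \<Longrightarrow>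
      length w' \<le> length u' \<and> (\<gamma>' \<noteq> [] \<longrightarrow> length w' < length u')"
    using prov_clause.hyps(2) by blast
  from prov_clause.hyps(1) show ?case
  proof (cases rule: clause.cases)
    case (C2b a \<beta> v)
    then show ?thesis using IH[of \<beta> v w] by simp
  next
    case (C3a A \<alpha> \<beta>)
    then show ?thesis using IH[of \<alpha> u "[]"] no_eps by simp
  next
    case (C3b A \<alpha> \<beta> v)
    then show ?thesis using IH[of \<alpha> u v] IH[of \<beta> v w] no_eps by fastforce
  qed simp_all
qed

lemma defined_goal_not_M: "defined_goal Sig N s R l X \<Longrightarrow> X \<noteq> M r"
  by (induction rule: defined_goal.induct) auto

lemma parent_input_length_le:
  assumes "cfg Sig N s R" and "parent Sig N s R l H C"
  shows "input_length C \<le> input_length H"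
proof -
  from assms(2) obtain body where "clause Sig N s R l H body" and "C \<in> set body"
    and body_provable: "\<forall>b\<in>set body. is_P b \<longrightarrow> provable Sig N s R l b"
    unfolding parent_def used_clause_def by blast
  then show ?thesis
  proof (cases rule: clause.cases)
    case (C3b A \<alpha> \<beta> u v w)
    then have "length v \<le> length u"
      using body_provable provable_P_length[OF cfg_rhs_nonempty[OF assms(1)]] by fastforce
    with C3b \<open>C \<in> set body\<close> show ?thesis by auto
  qed (use \<open>C \<in> set body\<close> in auto)
qed

lemma ancestor_input_length_le:
  assumes "cfg Sig N s R" and "ancestor Sig N s R l X Y"
  shows "input_length Y \<le> input_length X"
  using assms(2) unfolding ancestor_def
  by (induction rule: tranclp_induct) (use parent_input_length_le[OF assms(1)] in fastforce)+

lemma same_scc_input_length_eq: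
  assumes "cfg Sig N s R" and "same_scc Sig N s R l X Y"
  shows "input_length X = input_length Y"
  using assms(2) ancestor_input_length_le[OF assms(1)] unfolding same_scc_def
  by (meson le_antisym)

lemma used_clause_input_length_distinct:
  assumes cfg: "cfg Sig N s R" and used: "used_clause Sig N s R l H body"
    and "i < length body" "j < length body" "i \<noteq> j"
    and not_M: "\<And>r. body ! i \<noteq> M r" "\<And>r. body ! j \<noteq> M r"
  shows "input_length (body ! i) \<noteq> input_length (body ! j)"
proof -
  from used have "clause Sig N s R l H body"
    and body_provable: "\<forall>b\<in>set body. is_P b \<longrightarrow> provable Sig N s R l b"
    unfolding used_clause_def by auto
  then show ?thesis
  proof (cases rule: clause.cases)
    case (C3a A \<alpha>)
    have "i \<noteq> 0" "j \<noteq> 0"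
      using C3a not_M[of "(A, \<alpha>)"] by (metis nth_Cons_0)+
    with C3a assms(3-5) show ?thesis by simp
  next
    case (C3b A \<alpha> \<beta> u v w)
    have "provable Sig N s R l (P \<alpha> u v)"
      using body_provable C3b by simp
    from provable_P_length[OF cfg_rhs_nonempty[OF cfg] this]
    have "length v < length u"
      using cfg_rhs_nonempty[OF cfg C3b(3)] by simp
    have "i \<noteq> 0" "j \<noteq> 0"
      using C3b not_M[of "(A, \<alpha>)"] by (metis nth_Cons_0)+
    with C3b assms(3-5) have "i = 1 \<and> j = 2 \<or> i = 2 \<and> j = 1"
      by auto
    with C3b \<open>length v < length u\<close> show ?thesis
      by auto
  qed (use assms(3-5) in simp_all)
qed

theorem lemma3:
  fixes Sig :: "'t set" and N :: "'n set" and s :: 'n and R :: "('n, 't) rule set"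
    and l :: "'t list" and H :: "('n, 't) atom" and body :: "('n, 't) atom list"
    and i j :: nat
  assumes "cfg Sig N s R"
    and "is_prefix Sig s R l"
    and "defined_goal Sig N s R l H"
    and "used_clause Sig N s R l H body"
    and "i < length body" and "j < length body" and "i \<noteq> j"
    and "defined_goal Sig N s R l (body ! i)"
    and "defined_goal Sig N s R l (body ! j)"
  shows "\<not> same_scc Sig N s R l (body ! i) (body ! j)"
  using used_clause_input_length_distinct[OF assms(1,4-7)]
    defined_goal_not_M[OF assms(8)] defined_goal_not_M[OF assms(9)]
    same_scc_input_length_eq[OF assms(1)]
  by blast

end
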